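(* Let $p$ be a propositional variable. A substitution $\sigma$ is a unifier of $[1]p$ in $\mathbf{GLP}$ (i.e. $\mathbf{GLP}\vdash[1]\sigma(p)$) if and only if $\sigma\leq Q^k$ for some $k\geq 1$, where $Q^k$ denotes the substitution $p\mapsto Q^k(p)$ (leaving other variables fixed).
   Context: $\mathbf{GLP}$ is the polymodal logic with modalities $[0],[1],[2],\dots$ ($\langle k\rangle\phi:=\neg[k]\neg\phi$) axiomatized by: classical tautologies; $[k](\phi\to\psi)\to([k]\phi\to[k]\psi)$; $[k]([k]\phi\to\phi)\to[k]\phi$; $\langle j\rangle\phi\to[k]\langle j\rangle\phi$ for $j<k$; $[j]\phi\to[k]\phi$ for $j\leq k$; rules modus ponens and necessitation for each $[k]$. A substitution commutes with all connectives and modalities. For substitutions, $\tau\leq\sigma$ means there is a substitution $\theta$ with $\mathbf{GLP}\vdash\tau(q)\leftrightarrow\theta(\sigma(q))$ for every variable $q$. Define $Q_1(p):=p$, $Q_{i+1}(p):=p\lor[0]Q_i(p)$, and $Q^n(p):=\bigwedge_{i=1}^n([0]Q_i(p)\to Q_i(p))$. *)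

theory Defs
  imports Main
begin

datatype fm = Var nat | Bot | Imp fm fm | Box nat fm

definition Neg :: "fm \<Rightarrow> fm" where "Neg a = Imp a Bot"
definition Top :: fm where "Top = Neg Bot"
definition Or :: "fm \<Rightarrow> fm \<Rightarrow> fm" where "Or a b = Imp (Neg a) b"
definition And :: "fm \<Rightarrow> fm \<Rightarrow> fm" where "And a b = Neg (Imp a (Neg b))"
definition Iff :: "fm \<Rightarrow> fm \<Rightarrow> fm" where "Iff a b = And (Imp a b) (Imp b a)"
definition Dia :: "nat \<Rightarrow> fm \<Rightarrow> fm" where "Dia k a = Neg (Box k (Neg a))"

text \<open>Classical tautologies: formulas true under every Boolean valuation in which
variables and boxed subformulas are treated as atoms.\<close>

fun beval :: "(nat \<Rightarrow> bool) \<Rightarrow> (nat \<Rightarrow> fm \<Rightarrow> bool) \<Rightarrow> fm \<Rightarrow> bool" where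
  "beval v b (Var q) = v q"
| "beval v b Bot = False"
| "beval v b (Imp x y) = (beval v b x \<longrightarrow> beval v b y)"
| "beval v b (Box k x) = b k x"

definition tautology :: "fm \<Rightarrow> bool" where
  "tautology a \<longleftrightarrow> (\<forall>v b. beval v b a)"

inductive GLP :: "fm \<Rightarrow> bool" where
  taut: "tautology a \<Longrightarrow> GLP a"
| K: "GLP (Imp (Box k (Imp a b)) (Imp (Box k a) (Box k b)))"
| Loeb: "GLP (Imp (Box k (Imp (Box k a) a)) (Box k a))"
| neg_intro: "j < k \<Longrightarrow> GLP (Imp (Dia j a) (Box k (Dia j a)))"
| mono: "j \<le> k \<Longrightarrow> GLP (Imp (Box j a) (Box k a))"
| MP: "GLP (Imp a b) \<Longrightarrow> GLP a \<Longrightarrow> GLP b"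
| Nec: "GLP a \<Longrightarrow> GLP (Box k a)"

type_synonym substitution = "nat \<Rightarrow> fm"

primrec subst :: "substitution \<Rightarrow> fm \<Rightarrow> fm" where
  "subst s (Var q) = s q"
| "subst s Bot = Bot"
| "subst s (Imp x y) = Imp (subst s x) (subst s y)"
| "subst s (Box k x) = Box k (subst s x)"

text \<open>\<open>tau \<le> sigma\<close>: tau is (up to GLP-equivalence) an instance of sigma.\<close>

definition subst_le :: "substitution \<Rightarrow> substitution \<Rightarrow> bool" where
  "subst_le \<tau> \<sigma> \<longleftrightarrow> (\<exists>\<theta>. \<forall>q. GLP (Iff (\<tau> q) (subst \<theta> (\<sigma> q))))"

fun Q :: "nat \<Rightarrow> fm \<Rightarrow> fm" where
  "Q 0 p = p"  \<comment> \<open>unused index\<close>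
| "Q (Suc 0) p = p"
| "Q (Suc (Suc i)) p = Or p (Box 0 (Q (Suc i) p))"

fun Qconj :: "nat \<Rightarrow> fm \<Rightarrow> fm" where
  "Qconj 0 p = Top"  \<comment> \<open>empty conjunction, unused\<close>
| "Qconj (Suc 0) p = Imp (Box 0 (Q 1 p)) (Q 1 p)"
| "Qconj (Suc (Suc n)) p =
     And (Qconj (Suc n) p) (Imp (Box 0 (Q (Suc (Suc n)) p)) (Q (Suc (Suc n)) p))"

text \<open>The substitution \<open>p \<mapsto> Q^n(p)\<close>, leaving other variables fixed.\<close>

definition Qsubst :: "nat \<Rightarrow> nat \<Rightarrow> substitution" where
  "Qsubst p n = (\<lambda>q. if q = p then Qconj n (Var p) else Var q)"

end

theory Submission
  imports Defs
begin

text \<open>Reading every \<open>[1]x\<close> as \<open>[1]x \<and> (R \<rightarrow> x)\<close> and every \<open>[k]x\<close> with \<open>k \<ge> 2\<close> as \<open>\<top>\<close>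
  maps GLP-proofs to GLP-proofs as soon as the conjunction \<open>R\<close> contains enough reflection
  instances \<open>[0]c \<rightarrow> c\<close>. Hence if GLP proves \<open>[1]A\<close>, it proves \<open>R\<^sub>T \<rightarrow> A\<close>, where \<open>R\<^sub>T\<close>
  conjoins \<open>[0]c \<rightarrow> c\<close> over a finite list \<open>T\<close>. A pigeonhole argument over the \<open>c \<in> T\<close> for
  which \<open>c \<and> [0]c\<close> is already known turns this into \<open>Q\<^sub>k(A)\<close> with \<open>k = |T| + 1\<close>; under
  \<open>Q\<^sub>k(A)\<close> the formula \<open>A\<close> is equivalent to \<open>Q\<^sup>k(A)\<close>, so \<open>\<sigma>\<close> itself witnesses \<open>\<sigma> \<le> Q\<^sup>k\<close>.
  Conversely, \<open>[1]\<close> proves each conjunct \<open>[0]Q\<^sub>i \<rightarrow> Q\<^sub>i\<close> of \<open>Q\<^sup>k\<close>, because GLP proves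
  \<open>[1]([0]C \<rightarrow> C)\<close>.\<close>

lemma beval_derived_connectives [simp]:
  "beval v b (Neg a) = (\<not> beval v b a)"
  "beval v b Top = True"
  "beval v b (Or a c) = (beval v b a \<or> beval v b c)"
  "beval v b (And a c) = (beval v b a \<and> beval v b c)"
  "beval v b (Iff a c) = (beval v b a = beval v b c)"
  "beval v b (Dia k a) = (\<not> b k (Neg a))"
  by (auto simp: Neg_def Top_def Or_def And_def Iff_def Dia_def)

lemma subst_derived_connectives [simp]:
  "subst s (Neg a) = Neg (subst s a)"
  "subst s Top = Top"
  "subst s (Or a c) = Or (subst s a) (subst s c)"
  "subst s (And a c) = And (subst s a) (subst s c)"
  "subst s (Iff a c) = Iff (subst s a) (subst s c)"
  by (auto simp: Neg_def Top_def Or_def And_def Iff_def)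

lemma GLP_tautologyI: "(\<And>v b. beval v b a) \<Longrightarrow> GLP a"
  by (simp add: GLP.taut tautology_def)

lemma GLP_by_tautology:
  assumes "list_all GLP Ps" and "\<And>v b. list_all (beval v b) Ps \<Longrightarrow> beval v b c"
  shows "GLP c"
  using assms
proof (induction Ps arbitrary: c)
  case Nil
  then show ?case by (simp add: GLP_tautologyI)
next
  case (Cons a Ps)
  have "GLP (Imp a c)" using Cons by (intro Cons.IH) auto
  then show ?case using Cons.prems(1) GLP.MP by simp
qed

lemma GLP_by_tautology1:
  assumes "GLP a1" and "\<And>v b. beval v b a1 \<Longrightarrow> beval v b c"
  shows "GLP c"
  by (rule GLP_by_tautology[of "[a1]"]) (simp_all add: assms)

lemma GLP_by_tautology2:
  assumes "GLP a1" "GLP a2" and "\<And>v b. beval v b a1 \<Longrightarrow> beval v b a2 \<Longrightarrow> beval v b c"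
  shows "GLP c"
  by (rule GLP_by_tautology[of "[a1, a2]"]) (simp_all add: assms)

lemma GLP_by_tautology3:
  assumes "GLP a1" "GLP a2" "GLP a3"
    and "\<And>v b. beval v b a1 \<Longrightarrow> beval v b a2 \<Longrightarrow> beval v b a3 \<Longrightarrow> beval v b c"
  shows "GLP c"
  by (rule GLP_by_tautology[of "[a1, a2, a3]"]) (simp_all add: assms)

lemma GLP_box_mono: "GLP (Imp a c) \<Longrightarrow> GLP (Imp (Box k a) (Box k c))"
  using GLP.MP GLP.K GLP.Nec by blast

lemma GLP_box_Top: "GLP (Box k Top)"
  by (intro GLP.Nec GLP_tautologyI) simp

lemma GLP_box_And: "GLP (Imp (Box k a) (Imp (Box k c) (Box k (And a c))))"
proof -
  have "GLP (Imp (Box k a) (Box k (Imp c (And a c))))"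
    by (intro GLP_box_mono GLP_tautologyI) simp
  then show ?thesis
    by (rule GLP_by_tautology2[OF _ GLP.K]) auto
qed

lemma GLP_box0_trans: "GLP (Imp (Box 0 a) (Box 0 (Box 0 a)))"
proof -
  define c where "c = And a (Box 0 a)"
  have "GLP (Imp (Box 0 c) (Box 0 a))"
    unfolding c_def by (intro GLP_box_mono GLP_tautologyI) simp
  then have "GLP (Imp a (Imp (Box 0 c) c))"
    unfolding c_def by (rule GLP_by_tautology1) auto
  then have "GLP (Imp (Box 0 a) (Box 0 (Imp (Box 0 c) c)))"
    by (rule GLP_box_mono)
  moreover have "GLP (Imp (Box 0 c) (Box 0 (Box 0 a)))"
    unfolding c_def by (intro GLP_box_mono GLP_tautologyI) simp
  ultimately show ?thesis
    by (rule GLP_by_tautology3[OF _ GLP.Loeb]) auto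
qed

lemma GLP_box0_strong: "GLP (Imp (Box 0 a) (Box 0 (And a (Box 0 a))))"
  using GLP_box0_trans GLP_box_And by (rule GLP_by_tautology2) auto

lemma GLP_box_Neg_Neg: "GLP (Iff (Box k (Neg (Neg a))) (Box k a))"
proof -
  have "GLP (Imp (Box k (Neg (Neg a))) (Box k a))" "GLP (Imp (Box k a) (Box k (Neg (Neg a))))"
    by (intro GLP_box_mono GLP_tautologyI, simp)+
  then show ?thesis by (rule GLP_by_tautology2) auto
qed

text \<open>Either \<open>[0]c\<close> holds, and then so does \<open>[1]c\<close>, or \<open>\<langle>0\<rangle>\<not>c\<close> holds, and then so does
  \<open>[1]\<langle>0\<rangle>\<not>c\<close>.\<close>

lemma GLP_box1_reflection0: "GLP (Box 1 (Imp (Box 0 c) c))"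
proof -
  have "GLP (Imp (Box 0 c) (Box 1 (Imp (Box 0 c) c)))"
  proof -
    have "GLP (Imp (Box 1 c) (Box 1 (Imp (Box 0 c) c)))"
      by (intro GLP_box_mono GLP_tautologyI) simp
    then show ?thesis
      by (rule GLP_by_tautology2[OF GLP.mono[OF zero_le_one]]) auto
  qed
  moreover have "GLP (Imp (Dia 0 (Neg c)) (Box 1 (Imp (Box 0 c) c)))"
  proof -
    have "GLP (Imp (Dia 0 (Neg c)) (Imp (Box 0 c) c))"
      using GLP_box_Neg_Neg by (rule GLP_by_tautology1) auto
    then have "GLP (Imp (Box 1 (Dia 0 (Neg c))) (Box 1 (Imp (Box 0 c) c)))"
      by (rule GLP_box_mono)
    then show ?thesis
      by (rule GLP_by_tautology2[OF GLP.neg_intro[OF zero_less_one]]) auto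
  qed
  ultimately show ?thesis
    using GLP_box_Neg_Neg by (rule GLP_by_tautology3) auto
qed

lemma subst_Q: "subst s (Q i a) = Q i (subst s a)"
  by (induction i a rule: Q.induct) auto

lemma subst_Qconj: "subst s (Qconj k a) = Qconj k (subst s a)"
  by (induction k a rule: Qconj.induct) (auto simp: subst_Q)

lemma GLP_box1_Qconj: "1 \<le> k \<Longrightarrow> GLP (Box 1 (Qconj k a))"
proof (induction k a rule: Qconj.induct)
  case (2 a)
  then show ?case using GLP_box1_reflection0 by simp
next
  case (3 n a)
  then have "GLP (Box 1 (Qconj (Suc n) a))" by simp
  then show ?case
    using GLP_box1_reflection0 GLP_box_And GLP.MP by (simp only: Qconj.simps) blast
qed simp

lemma beval_Qconj:
  "1 \<le> k \<Longrightarrow> beval v b (Qconj k a) \<longleftrightarrow> (\<forall>j\<in>{1..k}. b 0 (Q j a) \<longrightarrow> beval v b (Q j a))"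
proof (induction k a rule: Qconj.induct)
  case (3 n a)
  then show ?case by (auto simp: atLeastAtMostSuc_conv)
qed auto

lemma beval_Q_of: "beval v b a \<Longrightarrow> beval v b (Q j a)"
  by (induction j a rule: Q.induct) auto

lemma beval_Qconj_of: "beval v b a \<Longrightarrow> beval v b (Qconj k a)"
  by (induction k a rule: Qconj.induct) (auto simp: beval_Q_of)

lemma beval_of_Q_Qconj:
  "1 \<le> j \<Longrightarrow> j \<le> k \<Longrightarrow> beval v b (Qconj k a) \<Longrightarrow> beval v b (Q j a) \<Longrightarrow> beval v b a"
proof (induction j a rule: Q.induct)
  case (3 i a)
  then show ?case by (auto simp: beval_Qconj)
qed auto

lemma GLP_Iff_Qconj_of_Q:
  assumes "1 \<le> k" and "GLP (Q k a)"
  shows "GLP (Iff a (Qconj k a))"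
  using assms(2)
proof (rule GLP_by_tautology1)
  fix v b
  assume "beval v b (Q k a)"
  then show "beval v b (Iff a (Qconj k a))"
    using assms(1) beval_of_Q_Qconj[of k k v b a] beval_Qconj_of[of v b a k] by auto
qed

fun box1_tr :: "fm \<Rightarrow> fm \<Rightarrow> fm" where
  "box1_tr R (Var q) = Var q"
| "box1_tr R Bot = Bot"
| "box1_tr R (Imp a c) = Imp (box1_tr R a) (box1_tr R c)"
| "box1_tr R (Box k a) =
     (if k = 0 then Box 0 a else if k = 1 then And (Box 1 a) (Imp R a) else Top)"

lemma box1_tr_Neg [simp]: "box1_tr R (Neg a) = Neg (box1_tr R a)"
  by (simp add: Neg_def)

lemma beval_box1_tr:
  "beval v b (box1_tr R a) = beval v (\<lambda>k c. beval v b (box1_tr R (Box k c))) a"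
  by (induction a) auto

lemma tautology_box1_tr: "tautology a \<Longrightarrow> tautology (box1_tr R a)"
  unfolding tautology_def by (metis beval_box1_tr)

fun reflection_conj :: "fm list \<Rightarrow> fm" where
  "reflection_conj [] = Top"
| "reflection_conj (a # T) = And (Imp (Box 0 a) a) (reflection_conj T)"

lemma beval_reflection_conj:
  "beval v b (reflection_conj T) \<longleftrightarrow> (\<forall>a\<in>set T. b 0 a \<longrightarrow> beval v b a)"
  by (induction T) auto

text \<open>Every axiom and rule instance except \<open>[0]a \<rightarrow> [1]a\<close> translates into a tautological
  consequence of itself and its premises; that one needs \<open>[0]a \<rightarrow> a\<close> among the hypotheses.\<close>

lemma GLP_box1_tr:
  "GLP \<phi> \<Longrightarrow> \<exists>S. \<forall>T. set S \<subseteq> set T \<longrightarrow> GLP (box1_tr (reflection_conj T) \<phi>)"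
proof (induction rule: GLP.induct)
  case (taut a)
  then show ?case using GLP.taut tautology_box1_tr by blast
next
  case (K k a c)
  show ?case by (intro exI allI impI GLP_by_tautology1[OF GLP.K[of k a c]]) auto
next
  case (Loeb k a)
  show ?case by (intro exI allI impI GLP_by_tautology1[OF GLP.Loeb[of k a]]) auto
next
  case (neg_intro j k a)
  show ?case
    using neg_intro
    by (intro exI allI impI GLP_by_tautology1[OF GLP.neg_intro[OF neg_intro]]) (auto simp: Dia_def)
next
  case (mono j k a)
  have "GLP (box1_tr (reflection_conj T) (Imp (Box j a) (Box k a)))" if "a \<in> set T" for T
  proof (rule GLP_by_tautology2[OF GLP.mono[OF mono]])
    show "GLP (Imp (reflection_conj T) (Imp (Box 0 a) a))"
      using that by (intro GLP_tautologyI) (auto simp: beval_reflection_conj)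
  qed (use mono in auto)
  then show ?case by (intro exI[of _ "[a]"]) auto
next
  case (MP a c)
  then obtain S1 S2 where
    "\<forall>T. set S1 \<subseteq> set T \<longrightarrow> GLP (box1_tr (reflection_conj T) (Imp a c))"
    "\<forall>T. set S2 \<subseteq> set T \<longrightarrow> GLP (box1_tr (reflection_conj T) a)"
    by blast
  then show ?case by (intro exI[of _ "S1 @ S2"]) (auto intro: GLP.MP)
next
  case (Nec a k)
  show ?case
    by (intro exI allI impI GLP_by_tautology2[OF GLP.Nec[OF Nec(1), of k] Nec(1)]) auto
qed

lemma GLP_reflection_conj_imp_of_box1:
  assumes "GLP (Box 1 a)"
  obtains T where "GLP (Imp (reflection_conj T) a)"
proof -
  obtain T where "GLP (box1_tr (reflection_conj T) (Box 1 a))"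
    using GLP_box1_tr[OF assms] by blast
  then have "GLP (Imp (reflection_conj T) a)"
    by (rule GLP_by_tautology1) simp
  then show ?thesis by (rule that)
qed

fun strong_box_conj :: "fm list \<Rightarrow> fm" where
  "strong_box_conj [] = Top"
| "strong_box_conj (a # J) = And (And a (Box 0 a)) (strong_box_conj J)"

lemma beval_strong_box_conj:
  "beval v b (strong_box_conj J) \<longleftrightarrow> (\<forall>a\<in>set J. beval v b a \<and> b 0 a)"
  by (induction J) auto

lemma GLP_strong_box_conj_box0: "GLP (Imp (strong_box_conj J) (Box 0 (strong_box_conj J)))"
proof (induction J)
  case Nil
  show ?case using GLP_box_Top by (rule GLP_by_tautology1) simp
next
  case (Cons a J)
  show ?case
    using GLP_box0_strong Cons GLP_box_And by (rule GLP_by_tautology3) auto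
qed

lemma GLP_strong_box_conj_Cons_box0:
  "GLP (Imp (strong_box_conj J) (Imp (Box 0 a) (Box 0 (strong_box_conj (a # J)))))"
  using GLP_box0_strong GLP_strong_box_conj_box0 GLP_box_And
  by (rule GLP_by_tautology3) auto

lemma GLP_strong_box_conj_imp_Or:
  assumes "GLP (Imp (reflection_conj T) a)"
    and "\<And>c. c \<in> set T \<Longrightarrow> c \<notin> set J \<Longrightarrow> GLP (Imp (strong_box_conj J) (Imp (Box 0 c) d))"
  shows "GLP (Imp (strong_box_conj J) (Or a d))"
proof (rule GLP_by_tautology)
  let ?Ps = "Imp (reflection_conj T) a #
    map (\<lambda>c. Imp (strong_box_conj J) (Imp (Box 0 c) d)) (filter (\<lambda>c. c \<notin> set J) T)"
  show "list_all GLP ?Ps"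
    using assms by (auto simp: list_all_iff)
  fix v b
  assume Ps: "list_all (beval v b) ?Ps"
  show "beval v b (Imp (strong_box_conj J) (Or a d))"
  proof (cases "beval v b (reflection_conj T)")
    case False
    then obtain c where "c \<in> set T" "b 0 c" "\<not> beval v b c"
      by (auto simp: beval_reflection_conj)
    then show ?thesis
      using Ps by (cases "c \<in> set J") (auto simp: list_all_iff beval_strong_box_conj)
  qed (use Ps in simp)
qed

text \<open>The list \<open>J\<close> collects hypotheses \<open>c\<close> of \<open>T\<close> known to hold together with \<open>[0]c\<close>;
  each of the \<open>m\<close> nested boxes of \<open>Q\<^sub>m\<^sub>+\<^sub>1\<close> adds one more, until \<open>J\<close> exhausts \<open>T\<close>.\<close>

lemma GLP_strong_box_conj_imp_Q:
  assumes "GLP (Imp (reflection_conj T) a)"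
  shows "set J \<subseteq> set T \<Longrightarrow> card (set T) < Suc m + card (set J) \<Longrightarrow>
    GLP (Imp (strong_box_conj J) (Q (Suc m) a))"
proof (induction m arbitrary: J)
  case 0
  then have "set J = set T" using card_seteq[of "set T" "set J"] by simp
  with assms show ?case
    by (elim GLP_by_tautology1) (auto simp: beval_strong_box_conj beval_reflection_conj)
next
  case (Suc m)
  have "GLP (Imp (strong_box_conj J) (Imp (Box 0 c) (Box 0 (Q (Suc m) a))))"
    if "c \<in> set T" "c \<notin> set J" for c
  proof -
    have "GLP (Imp (strong_box_conj (c # J)) (Q (Suc m) a))"
      using Suc.prems that by (intro Suc.IH) auto
    then have "GLP (Imp (Box 0 (strong_box_conj (c # J))) (Box 0 (Q (Suc m) a)))"
      by (rule GLP_box_mono)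
    then show ?thesis
      using GLP_strong_box_conj_Cons_box0 by (rule GLP_by_tautology2) auto
  qed
  with assms show ?case
    by (simp add: GLP_strong_box_conj_imp_Or)
qed

lemma GLP_Q_of_reflection:
  assumes "GLP (Imp (reflection_conj T) a)"
  shows "GLP (Q (Suc (card (set T))) a)"
proof -
  have "GLP (Imp (strong_box_conj []) (Q (Suc (card (set T))) a))"
    using assms by (rule GLP_strong_box_conj_imp_Q) auto
  then show ?thesis by (rule GLP_by_tautology1) simp
qed

lemma subst_le_Qsubst_of_Q:
  assumes "1 \<le> k" and "GLP (Q k (\<sigma> p))"
  shows "subst_le \<sigma> (Qsubst p k)"
  unfolding subst_le_def
proof (intro exI[of _ \<sigma>] allI)
  fix q
  show "GLP (Iff (\<sigma> q) (subst \<sigma> (Qsubst p k q)))"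
  proof (cases "q = p")
    case True
    then show ?thesis
      using GLP_Iff_Qconj_of_Q[OF assms] by (simp add: Qsubst_def subst_Qconj)
  qed (simp add: Qsubst_def GLP_tautologyI)
qed

lemma GLP_box1_of_subst_le_Qsubst:
  assumes "1 \<le> k" and "subst_le \<sigma> (Qsubst p k)"
  shows "GLP (Box 1 (\<sigma> p))"
proof -
  obtain \<theta> where "GLP (Iff (\<sigma> p) (Qconj k (\<theta> p)))"
    using assms(2) unfolding subst_le_def by (metis Qsubst_def subst.simps(1) subst_Qconj)
  then have "GLP (Imp (Qconj k (\<theta> p)) (\<sigma> p))"
    by (rule GLP_by_tautology1) auto
  then show ?thesis
    using GLP_box1_Qconj[OF assms(1)] GLP_box_mono GLP.MP by blast
qed

theorem mainTheorem2:
  fixes p :: nat and \<sigma> :: substitution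
  shows "GLP (subst \<sigma> (Box 1 (Var p))) \<longleftrightarrow> (\<exists>k\<ge>1. subst_le \<sigma> (Qsubst p k))"
proof
  assume "GLP (subst \<sigma> (Box 1 (Var p)))"
  then obtain T where "GLP (Imp (reflection_conj T) (\<sigma> p))"
    using GLP_reflection_conj_imp_of_box1 by auto
  then have "GLP (Q (Suc (card (set T))) (\<sigma> p))"
    by (rule GLP_Q_of_reflection)
  then have "subst_le \<sigma> (Qsubst p (Suc (card (set T))))"
    by (intro subst_le_Qsubst_of_Q) simp_all
  then show "\<exists>k\<ge>1. subst_le \<sigma> (Qsubst p k)"
    by (intro exI conjI) simp_all
next
  assume "\<exists>k\<ge>1. subst_le \<sigma> (Qsubst p k)"
  then show "GLP (subst \<sigma> (Box 1 (Var p)))"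
    using GLP_box1_of_subst_le_Qsubst by auto
qed

end
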